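(* Let $\beta<0$, $a,\gamma\in\mathbb{R}$, and let $\Omega\subset\mathbb{R}$ be a compact interval containing $0$ in its interior. Consider the control system on $\mathbb{R}^2$ $$\dot s=\beta(s-\omega),\qquad \dot t=(a\omega+\gamma)s,\qquad \omega\in\Omega .$$ Then: (1) If $\gamma\neq0$, the set $\Omega\times\mathbb{R}$ is the only control set of the system. (2) If $\gamma=0$ and $a\neq 0$, then for every $t\in\mathbb{R}$ the singleton $\{(0,t)\}$ is a control set of the system (and these are distinct control sets).
   Context: Controls are piecewise constant functions $\omega:\mathbb{R}\to\Omega$; $\varphi(\tau,\mathbf v,\omega)$ is the solution at time $\tau$ from $\mathbf v$, and $\mathcal O^+(\mathbf v)$ is the set of points reachable from $\mathbf v$ in nonnegative time. A control set is a nonempty set $\mathcal C\subset\mathbb{R}^2$, maximal with respect to inclusion, such that (i) for every $x\in\mathcal C$ there is a control $\omega$ with $\varphi(\tau,x,\omega)\in\mathcal C$ for all $\tau\ge0$, and (ii) $\mathcal C\subset\overline{\mathcal O^+(x)}$ for all $x\in\mathcal C$. *)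

theory Defs
  imports "HOL-Analysis.Analysis"
begin

definition piecewise_constant :: "(real \<Rightarrow> real) \<Rightarrow> bool" where
  "piecewise_constant w \<longleftrightarrow>
     (\<forall>a b. \<exists>S. finite S \<and>
        (\<forall>x y. a \<le> x \<longrightarrow> x \<le> y \<longrightarrow> y \<le> b \<longrightarrow> {x..y} \<inter> S = {} \<longrightarrow> w x = w y))"

definition admissible :: "real set \<Rightarrow> (real \<Rightarrow> real) \<Rightarrow> bool" where
  "admissible U w \<longleftrightarrow> piecewise_constant w \<and> (\<forall>r. w r \<in> U)"

text \<open>\<open>x\<close> is the solution (in nonnegative time) from \<open>v\<close> under control \<open>w\<close>,
  in the Caratheodory (integral equation) sense.\<close>
definition is_solution ::
  "(real \<Rightarrow> real \<times> real \<Rightarrow> real \<times> real) \<Rightarrow> (real \<Rightarrow> real) \<Rightarrow> real \<times> real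
     \<Rightarrow> (real \<Rightarrow> real \<times> real) \<Rightarrow> bool" where
  "is_solution f w v x \<longleftrightarrow>
     x 0 = v \<and> (\<forall>\<tau>\<ge>0. ((\<lambda>r. f (w r) (x r)) has_integral (x \<tau> - v)) {0..\<tau>})"

definition reach_pos ::
  "(real \<Rightarrow> real \<times> real \<Rightarrow> real \<times> real) \<Rightarrow> real set \<Rightarrow> real \<times> real \<Rightarrow> (real \<times> real) set" where
  "reach_pos f U v = {x \<tau> | x w \<tau>. admissible U w \<and> is_solution f w v x \<and> \<tau> \<ge> 0}"

definition controlled_invariant_core ::
  "(real \<Rightarrow> real \<times> real \<Rightarrow> real \<times> real) \<Rightarrow> real set \<Rightarrow> (real \<times> real) set \<Rightarrow> bool" where
  "controlled_invariant_core f U C \<longleftrightarrow>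
     C \<noteq> {} \<and>
     (\<forall>v\<in>C. \<exists>w x. admissible U w \<and> is_solution f w v x \<and> (\<forall>\<tau>\<ge>0. x \<tau> \<in> C)) \<and>
     (\<forall>v\<in>C. C \<subseteq> closure (reach_pos f U v))"

definition control_set ::
  "(real \<Rightarrow> real \<times> real \<Rightarrow> real \<times> real) \<Rightarrow> real set \<Rightarrow> (real \<times> real) set \<Rightarrow> bool" where
  "control_set f U C \<longleftrightarrow> controlled_invariant_core f U C \<and>
     (\<forall>D. C \<subseteq> D \<longrightarrow> controlled_invariant_core f U D \<longrightarrow> D = C)"

definition sys :: "real \<Rightarrow> real \<Rightarrow> real \<Rightarrow> real \<Rightarrow> real \<times> real \<Rightarrow> real \<times> real" where
  "sys \<beta> a \<gamma> u p = (\<beta> * (fst p - u), (a * u + \<gamma>) * fst p)"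

end

(*
  The s-component obeys s' = \<beta> (s - \<omega>) with \<beta> < 0, so its distance to the
  control range \<Omega> = [u1, u2] decays like exp (\<beta> \<tau>).  Hence every
  controlled invariant set lies in the forward invariant strip \<Omega> \<times> \<real>.

  For \<gamma> \<noteq> 0 the strip is approximately controllable.  Under a constant
  control c the t-component eventually grows at rate (a c + \<gamma>) c, and near
  c = 0 this rate takes both signs.  Holding such a c for a time T and then the
  control s* for a fixed time L brings s within exp (\<beta> L) of s*, while the
  final value of t depends continuously on T and is unbounded in the right
  direction, so the intermediate value theorem lets it hit any target.

  For \<gamma> = 0 the points (0, t) are equilibria of the control 0.  Along
  solutions the potential V = t/a + s^2/(2\<beta>) has derivative s^2, and in the
  strip the corrected potential H = V - s^4/(4\<beta>M^2), M = u2 - u1, has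
  derivative s^2 (1 - s (s - \<omega>)/M^2) \<ge> 0.  A point p of a control set
  containing (0, t) is approximately reachable from (0, t) and vice versa, so
  V (0, t) \<le> V p and H p \<le> H (0, t) = V (0, t).  Since H p \<ge> V p with
  equality only for s = 0, p = (0, t).
*)

theory Submission
  imports Defs
begin

section \<open>Solutions and reachable sets\<close>

lemma has_vector_derivative_fst:
  "(x has_vector_derivative d) F \<Longrightarrow> ((\<lambda>r. fst (x r)) has_real_derivative fst d) F"
  unfolding has_vector_derivative_def has_field_derivative_def
  by (drule has_derivative_fst) (simp add: mult_commute_abs)

lemma has_vector_derivative_snd:
  "(x has_vector_derivative d) F \<Longrightarrow> ((\<lambda>r. snd (x r)) has_real_derivative snd d) F"
  unfolding has_vector_derivative_def has_field_derivative_def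
  by (drule has_derivative_snd) (simp add: mult_commute_abs)

lemma admissible_const_control: "c \<in> U \<Longrightarrow> admissible U (\<lambda>_. c)"
  unfolding admissible_def piecewise_constant_def by auto

lemma admissible_switch_control:
  assumes "c1 \<in> U" "c2 \<in> U"
  shows "admissible U (\<lambda>r. if r < T then c1 else c2)"
  unfolding admissible_def piecewise_constant_def
  using assms by (auto intro!: exI[of _ "{T}"])

lemma piecewise_constant_eventually_const:
  assumes "piecewise_constant w"
  obtains S where "finite S" "\<And>r. r \<in> {a<..<b} - S \<Longrightarrow> eventually (\<lambda>y. w y = w r) (nhds r)"
proof -
  obtain S where S: "finite S"
    and wS: "\<And>y z. a \<le> y \<Longrightarrow> y \<le> z \<Longrightarrow> z \<le> b \<Longrightarrow> {y..z} \<inter> S = {} \<Longrightarrow> w y = w z"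
    using assms unfolding piecewise_constant_def by meson
  have "eventually (\<lambda>y. w y = w r) (nhds r)" if r: "r \<in> {a<..<b} - S" for r
  proof -
    obtain d where d: "d > 0" "\<And>z. z \<in> S \<Longrightarrow> z \<noteq> r \<Longrightarrow> d \<le> dist r z"
      using finite_set_avoid[OF S, of r] by blast
    define e where "e = min d (min (r - a) (b - r))"
    have "w y = w r" if y: "dist y r < e" for y
    proof -
      have "{min y r..max y r} \<inter> S = {}"
      proof (rule ccontr)
        assume "{min y r..max y r} \<inter> S \<noteq> {}"
        then obtain z where z: "z \<in> S" "min y r \<le> z" "z \<le> max y r" by auto
        then have "dist r z < d" using y by (auto simp: e_def dist_real_def)
        moreover have "z \<noteq> r" using z r by auto
        ultimately show False using d z by fastforce
      qed
      moreover have "a \<le> min y r" "max y r \<le> b" using y r by (auto simp: e_def dist_real_def)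
      ultimately have "w (min y r) = w (max y r)" using wS by simp
      then show ?thesis by (cases "y \<le> r") (auto simp: min_def max_def)
    qed
    moreover have "e > 0" using d r by (auto simp: e_def)
    ultimately show ?thesis unfolding eventually_nhds_metric by blast
  qed
  with S that show ?thesis by blast
qed

lemma reach_posI:
  "admissible U w \<Longrightarrow> is_solution f w v x \<Longrightarrow> 0 \<le> \<tau> \<Longrightarrow> x \<tau> \<in> reach_pos f U v"
  unfolding reach_pos_def by blast

lemma reach_posE:
  assumes "q \<in> reach_pos f U v"
  obtains x w \<tau> where "q = x \<tau>" "admissible U w" "is_solution f w v x" "0 \<le> \<tau>"
  using assms unfolding reach_pos_def by blast

lemma is_solutionI_vector_derivative:
  assumes "x 0 = v" "continuous_on {0..} x" "finite S"
    "\<And>r. 0 < r \<Longrightarrow> r \<notin> S \<Longrightarrow> (x has_vector_derivative f (w r) (x r)) (at r)"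
  shows "is_solution f w v x"
  unfolding is_solution_def
proof (intro conjI allI impI)
  fix \<tau> :: real assume "0 \<le> \<tau>"
  have "((\<lambda>r. f (w r) (x r)) has_integral (x \<tau> - x 0)) {0..\<tau>}"
    using assms(2-4) \<open>0 \<le> \<tau>\<close>
    by (intro fundamental_theorem_of_calculus_interior_strong[of S])
      (auto intro: continuous_on_subset)
  then show "((\<lambda>r. f (w r) (x r)) has_integral (x \<tau> - v)) {0..\<tau>}" using assms(1) by simp
qed (fact assms(1))

lemma solution_piecewise_differentiable:
  assumes adm: "admissible U w" and sol: "is_solution f w v x" and T: "0 \<le> T"
    and f_cont: "\<And>u. continuous_on UNIV (f u)"
  obtains S where "finite S" "continuous_on {0..T} x"
    "\<And>r. r \<in> {0<..<T} - S \<Longrightarrow> (x has_vector_derivative f (w r) (x r)) (at r)"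
proof -
  define G where "G r = f (w r) (x r)" for r
  have G_has_int: "(G has_integral (x u - v)) {0..u}" if "0 \<le> u" for u
    using sol that unfolding is_solution_def G_def by blast
  have x_eq: "x u = v + integral {0..u} G" if "0 \<le> u" for u
    using integral_unique[OF G_has_int[OF that]] by simp
  have G_int: "G integrable_on {0..T}"
    using G_has_int[OF T] by blast
  have "continuous_on {0..T} (\<lambda>u. v + integral {0..u} G)"
    by (intro continuous_intros indefinite_integral_continuous_1 G_int)
  then have x_cont: "continuous_on {0..T} x"
    by (rule continuous_on_eq) (simp add: x_eq)
  have "piecewise_constant w" using adm unfolding admissible_def by simp
  then obtain S where S: "finite S"
    and w_loc: "\<And>r. r \<in> {0<..<T} - S \<Longrightarrow> eventually (\<lambda>y. w y = w r) (nhds r)"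
    using piecewise_constant_eventually_const[of w 0 T] by blast
  have "(x has_vector_derivative G r) (at r)" if r: "r \<in> {0<..<T} - S" for r
  proof -
    have at_r: "at r within {0..T} = at r"
      by (rule at_within_interior) (use r in auto)
    have "continuous (at r within {0..T}) x"
      using x_cont r by (simp add: continuous_on_eq_continuous_within)
    then have "isCont x r" by (simp add: at_r)
    moreover have "isCont (f (w r)) (x r)"
      using f_cont continuous_on_eq_continuous_at by blast
    ultimately have "isCont (\<lambda>y. f (w r) (x y)) r" by (rule isCont_o2)
    moreover have "eventually (\<lambda>y. G y = f (w r) (x y)) (nhds r)"
      using w_loc[OF r] by eventually_elim (simp add: G_def)
    ultimately have "isCont G r" by (simp add: isCont_cong)
    then have "((\<lambda>u. integral {0..u} G) has_vector_derivative G r) (at r)"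
      using integral_has_vector_derivative_continuous_at[OF G_int, of r "{}"] r at_r
      by (simp add: continuous_at_imp_continuous_at_within)
    then have "((\<lambda>u. v + integral {0..u} G) has_vector_derivative G r) (at r)"
      using has_vector_derivative_add[OF has_vector_derivative_const] by fastforce
    then show ?thesis
      by (rule has_vector_derivative_transform_within_open[of _ _ _ "{0<..<T}"]) (use r x_eq in auto)
  qed
  with S x_cont that show ?thesis unfolding G_def by blast
qed

lemma nondecreasing_if_derivative_nonneg:
  fixes h h' :: "real \<Rightarrow> real"
  assumes "finite S" "a \<le> b" "continuous_on {a..b} h"
    "\<And>r. r \<in> {a<..<b} - S \<Longrightarrow> (h has_real_derivative h' r) (at r)"
    "\<And>r. r \<in> {a..b} \<Longrightarrow> 0 \<le> h' r"
  shows "h a \<le> h b"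
proof -
  have "(h' has_integral (h b - h a)) {a..b}"
    using assms(1-4) by (intro fundamental_theorem_of_calculus_interior_strong)
      (auto simp: has_real_derivative_iff_has_vector_derivative)
  then have "0 \<le> h b - h a" by (rule has_integral_nonneg) (use assms(5) in auto)
  then show ?thesis by simp
qed

lemma closure_reach_pos_nondecreasing:
  fixes \<Phi> :: "real \<times> real \<Rightarrow> real"
  assumes "continuous_on UNIV \<Phi>" "\<And>q. q \<in> reach_pos f U v \<Longrightarrow> \<Phi> v \<le> \<Phi> q"
    and "q \<in> closure (reach_pos f U v)"
  shows "\<Phi> v \<le> \<Phi> q"
proof -
  have "closure (reach_pos f U v) \<subseteq> {q. \<Phi> v \<le> \<Phi> q}"
    using assms(1,2) by (intro closure_minimal closed_Collect_le continuous_on_const) auto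
  with assms(3) show ?thesis by blast
qed

lemma equilibrium_controlled_invariant_core:
  assumes "u \<in> U" "f u p = 0"
  shows "controlled_invariant_core f U {p}"
  unfolding controlled_invariant_core_def
proof (intro conjI ballI)
  have sol: "is_solution f (\<lambda>_. u) p (\<lambda>_. p)"
    using assms(2) by (simp add: is_solution_def)
  then show "\<exists>w x. admissible U w \<and> is_solution f w v x \<and> (\<forall>\<tau>\<ge>0. x \<tau> \<in> {p})" if "v \<in> {p}" for v
    using that admissible_const_control[OF assms(1)] by auto
  have "p \<in> reach_pos f U p"
    using reach_posI[OF admissible_const_control[OF assms(1)] sol, of 0] by simp
  then show "{p} \<subseteq> closure (reach_pos f U v)" if "v \<in> {p}" for v
    using that closure_subset by auto
qed simp

lemma unique_control_setI:
  assumes "controlled_invariant_core f U S" "\<And>D. controlled_invariant_core f U D \<Longrightarrow> D \<subseteq> S"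
  shows "control_set f U S \<and> (\<forall>C. control_set f U C \<longrightarrow> C = S)"
  using assms unfolding control_set_def by blast

section \<open>Relaxation of the \<open>s\<close>-component\<close>

lemma continuous_on_sys: "continuous_on UNIV (sys b a g u)"
  unfolding sys_def by (intro continuous_intros)

lemma sys_solution_derivatives:
  assumes "admissible U w" "is_solution (sys b a g) w v x" "0 \<le> T"
  obtains S where "finite S" "continuous_on {0..T} x"
    "\<And>r. r \<in> {0<..<T} - S \<Longrightarrow> ((\<lambda>r. fst (x r)) has_real_derivative b * (fst (x r) - w r)) (at r)"
    "\<And>r. r \<in> {0<..<T} - S \<Longrightarrow> ((\<lambda>r. snd (x r)) has_real_derivative (a * w r + g) * fst (x r)) (at r)"
proof -
  obtain S where "finite S" "continuous_on {0..T} x"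
    and x': "\<And>r. r \<in> {0<..<T} - S \<Longrightarrow> (x has_vector_derivative sys b a g (w r) (x r)) (at r)"
    using solution_piecewise_differentiable[OF assms continuous_on_sys] by blast
  with that show ?thesis
    using has_vector_derivative_fst[OF x'] has_vector_derivative_snd[OF x'] by (simp add: sys_def)
qed

lemma relaxation_lower_bound:
  fixes s w :: "real \<Rightarrow> real"
  assumes b: "b \<le> 0" and S: "finite S" and \<tau>: "0 \<le> \<tau>" and s_cont: "continuous_on {0..\<tau>} s"
    and s': "\<And>r. r \<in> {0<..<\<tau>} - S \<Longrightarrow> (s has_real_derivative b * (s r - w r)) (at r)"
    and w: "\<And>r. r \<in> {0..\<tau>} \<Longrightarrow> c \<le> w r"
  shows "exp (b * \<tau>) * (s 0 - c) \<le> s \<tau> - c"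
proof -
  have "exp (- b * 0) * (s 0 - c) \<le> exp (- b * \<tau>) * (s \<tau> - c)"
  proof (rule nondecreasing_if_derivative_nonneg[OF S \<tau>, where h' = "\<lambda>r. exp (- b * r) * b * (c - w r)"])
    show "continuous_on {0..\<tau>} (\<lambda>r. exp (- b * r) * (s r - c))"
      by (intro continuous_intros s_cont)
    show "((\<lambda>r. exp (- b * r) * (s r - c)) has_real_derivative exp (- b * r) * b * (c - w r)) (at r)"
      if "r \<in> {0<..<\<tau>} - S" for r
      by (rule derivative_eq_intros s'[OF that] refl)+ (simp add: algebra_simps)
    show "0 \<le> exp (- b * r) * b * (c - w r)" if "r \<in> {0..\<tau>}" for r
    proof -
      have "0 \<le> b * (c - w r)" using b w[OF that] by (intro mult_nonpos_nonpos) auto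
      then show ?thesis by (simp add: mult.assoc)
    qed
  qed
  then have "exp (b * \<tau>) * (s 0 - c) \<le> exp (b * \<tau>) * (exp (- b * \<tau>) * (s \<tau> - c))"
    by simp
  also have "\<dots> = s \<tau> - c" by (simp add: exp_minus field_simps)
  finally show ?thesis .
qed

lemma relaxation_upper_bound:
  fixes s w :: "real \<Rightarrow> real"
  assumes "b \<le> 0" "finite S" "0 \<le> \<tau>" "continuous_on {0..\<tau>} s"
    and s': "\<And>r. r \<in> {0<..<\<tau>} - S \<Longrightarrow> (s has_real_derivative b * (s r - w r)) (at r)"
    and w: "\<And>r. r \<in> {0..\<tau>} \<Longrightarrow> w r \<le> c"
  shows "s \<tau> - c \<le> exp (b * \<tau>) * (s 0 - c)"
proof -
  have "exp (b * \<tau>) * (- s 0 - - c) \<le> - s \<tau> - - c"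
  proof (rule relaxation_lower_bound[OF assms(1-3), where w = "\<lambda>r. - w r"])
    show "continuous_on {0..\<tau>} (\<lambda>r. - s r)" by (intro continuous_intros assms(4))
    show "((\<lambda>r. - s r) has_real_derivative b * (- s r - - w r)) (at r)"
      if "r \<in> {0<..<\<tau>} - S" for r
      using DERIV_minus[OF s'[OF that]] by (simp add: algebra_simps)
  qed (use w in auto)
  then show ?thesis by (simp add: algebra_simps)
qed

definition dist_to_interval :: "real \<Rightarrow> real \<Rightarrow> real \<Rightarrow> real" where
  "dist_to_interval u1 u2 s = max (s - u2) (max (u1 - s) 0)"

lemma dist_to_interval_nonneg: "0 \<le> dist_to_interval u1 u2 s"
  by (simp add: dist_to_interval_def)

lemma dist_to_interval_le_0_iff: "dist_to_interval u1 u2 s \<le> 0 \<longleftrightarrow> s \<in> {u1..u2}"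
  by (auto simp: dist_to_interval_def)

lemma dist_to_interval_decay:
  assumes b: "b < 0" and adm: "admissible {u1..u2} w" and sol: "is_solution (sys b a g) w v x"
    and \<tau>: "0 \<le> \<tau>"
  shows "dist_to_interval u1 u2 (fst (x \<tau>)) \<le> exp (b * \<tau>) * dist_to_interval u1 u2 (fst v)"
proof -
  obtain S where S: "finite S" and x_cont: "continuous_on {0..\<tau>} x"
    and s': "\<And>r. r \<in> {0<..<\<tau>} - S \<Longrightarrow> ((\<lambda>r. fst (x r)) has_real_derivative b * (fst (x r) - w r)) (at r)"
    by (rule sys_solution_derivatives[OF adm sol \<tau>]) blast
  have s_cont: "continuous_on {0..\<tau>} (\<lambda>r. fst (x r))" by (intro continuous_intros x_cont)
  have w: "u1 \<le> w r" "w r \<le> u2" for r using adm unfolding admissible_def by auto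
  have x0: "x 0 = v" using sol unfolding is_solution_def by simp
  let ?d = "dist_to_interval u1 u2 (fst v)" and ?e = "exp (b * \<tau>)"
  have "fst (x \<tau>) - u2 \<le> ?e * (fst (x 0) - u2)"
    by (rule relaxation_upper_bound[OF _ S \<tau> s_cont s']) (use b w in auto)
  also have "\<dots> = ?e * (fst v - u2)" by (simp add: x0)
  also have "\<dots> \<le> ?e * ?d" by (intro mult_left_mono) (auto simp: dist_to_interval_def)
  finally have upper: "fst (x \<tau>) - u2 \<le> ?e * ?d" .
  have "?e * (fst (x 0) - u1) \<le> fst (x \<tau>) - u1"
    by (rule relaxation_lower_bound[OF _ S \<tau> s_cont s']) (use b w in auto)
  then have "u1 - fst (x \<tau>) \<le> ?e * (u1 - fst v)" by (simp add: x0 algebra_simps)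
  also have "\<dots> \<le> ?e * ?d" by (intro mult_left_mono) (auto simp: dist_to_interval_def)
  finally have lower: "u1 - fst (x \<tau>) \<le> ?e * ?d" .
  show ?thesis
    using upper lower dist_to_interval_nonneg[of u1 u2 "fst v"]
    by (simp add: dist_to_interval_def)
qed

lemma reach_pos_dist_to_interval_le:
  assumes "b < 0" "q \<in> reach_pos (sys b a g) {u1..u2} v"
  shows "dist_to_interval u1 u2 (fst q) \<le> dist_to_interval u1 u2 (fst v)"
proof -
  obtain x w \<tau> where q: "q = x \<tau>" "admissible {u1..u2} w" "is_solution (sys b a g) w v x" "0 \<le> \<tau>"
    using assms(2) by (rule reach_posE)
  have "exp (b * \<tau>) \<le> 1" using assms(1) q(4) by (simp add: mult_nonpos_nonneg)
  then have "exp (b * \<tau>) * dist_to_interval u1 u2 (fst v) \<le> dist_to_interval u1 u2 (fst v)"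
    using dist_to_interval_nonneg by (simp add: mult_left_le_one_le)
  with dist_to_interval_decay[OF assms(1) q(2-4)] q(1) show ?thesis by simp
qed

lemma reach_pos_subset_strip:
  assumes "b < 0" "fst v \<in> {u1..u2}"
  shows "reach_pos (sys b a g) {u1..u2} v \<subseteq> {u1..u2} \<times> UNIV"
proof
  fix q assume "q \<in> reach_pos (sys b a g) {u1..u2} v"
  then have "dist_to_interval u1 u2 (fst q) \<le> dist_to_interval u1 u2 (fst v)"
    by (rule reach_pos_dist_to_interval_le[OF assms(1)])
  also have "\<dots> \<le> 0" using assms(2) by (simp only: dist_to_interval_le_0_iff)
  finally show "q \<in> {u1..u2} \<times> UNIV" by (simp add: dist_to_interval_le_0_iff mem_Times_iff)
qed

lemma controlled_invariant_core_subset_strip: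
  assumes b: "b < 0" and C: "controlled_invariant_core (sys b a g) {u1..u2} C"
  shows "C \<subseteq> {u1..u2} \<times> UNIV"
proof
  fix v assume v: "v \<in> C"
  let ?d = "\<lambda>q. dist_to_interval u1 u2 (fst q)"
  obtain w x where adm: "admissible {u1..u2} w" and sol: "is_solution (sys b a g) w v x"
    and stays: "\<forall>\<tau>\<ge>0. x \<tau> \<in> C"
    using C v unfolding controlled_invariant_core_def by blast
  have v_approx: "v \<in> closure (reach_pos (sys b a g) {u1..u2} (x 1))"
    using C v stays unfolding controlled_invariant_core_def by auto
  have "- ?d (x 1) \<le> - ?d v"
  proof (rule closure_reach_pos_nondecreasing[OF _ _ v_approx])
    show "continuous_on UNIV (\<lambda>q. - ?d q)"
      unfolding dist_to_interval_def by (intro continuous_intros)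
    show "- ?d (x 1) \<le> - ?d q" if "q \<in> reach_pos (sys b a g) {u1..u2} (x 1)" for q
      using reach_pos_dist_to_interval_le[OF b that] by simp
  qed
  moreover have "?d (x 1) \<le> exp b * ?d v"
    using dist_to_interval_decay[OF b adm sol, of 1] sol by (simp add: is_solution_def)
  ultimately have "(1 - exp b) * ?d v \<le> 0" by (simp add: algebra_simps)
  moreover have "0 < 1 - exp b" using b by simp
  ultimately have "?d v \<le> 0" by (simp add: mult_le_0_iff)
  then show "v \<in> {u1..u2} \<times> UNIV" by (simp add: dist_to_interval_le_0_iff mem_Times_iff)
qed

section \<open>Approximate controllability of the strip for \<open>\<gamma> \<noteq> 0\<close>\<close>

definition traj :: "real \<Rightarrow> real \<Rightarrow> real \<Rightarrow> real \<Rightarrow> real \<times> real \<Rightarrow> real \<Rightarrow> real \<times> real" where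
  "traj b a g c p \<tau> = (c + (fst p - c) * exp (b * \<tau>),
     snd p + (a * c + g) * (c * \<tau> + (fst p - c) / b * (exp (b * \<tau>) - 1)))"

lemma traj_0 [simp]: "traj b a g c p 0 = p"
  by (simp add: traj_def)

lemma fst_traj_minus: "fst (traj b a g c p \<tau>) - c = (fst p - c) * exp (b * \<tau>)"
  by (simp add: traj_def)

lemma continuous_on_traj: "continuous_on X (traj b a g c p)"
  unfolding traj_def by (intro continuous_intros)

lemma traj_has_vector_derivative:
  assumes "b \<noteq> 0"
  shows "(traj b a g c p has_vector_derivative sys b a g c (traj b a g c p \<tau>)) (at \<tau> within X)"
proof -
  have s': "((\<lambda>\<tau>. c + (fst p - c) * exp (b * \<tau>)) has_real_derivative
      b * ((fst p - c) * exp (b * \<tau>))) (at \<tau> within X)"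
    by (auto intro!: derivative_eq_intros)
  have t': "((\<lambda>\<tau>. snd p + (a * c + g) * (c * \<tau> + (fst p - c) / b * (exp (b * \<tau>) - 1)))
      has_real_derivative (a * c + g) * (c + (fst p - c) * exp (b * \<tau>))) (at \<tau> within X)"
    using assms by (auto intro!: derivative_eq_intros simp: field_simps)
  show ?thesis
    using has_vector_derivative_Pair[OF s' [unfolded has_real_derivative_iff_has_vector_derivative]
        t' [unfolded has_real_derivative_iff_has_vector_derivative]]
    unfolding traj_def sys_def by (simp add: algebra_simps)
qed

lemma traj_solution: "b \<noteq> 0 \<Longrightarrow> is_solution (sys b a g) (\<lambda>_. c) p (traj b a g c p)"
  by (rule is_solutionI_vector_derivative[where S = "{}"])
    (simp_all add: traj_has_vector_derivative continuous_on_traj)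

lemma switched_traj_solution:
  assumes b: "b \<noteq> 0" and T: "0 \<le> T"
  shows "is_solution (sys b a g) (\<lambda>r. if r < T then c1 else c2) v
    (\<lambda>\<tau>. if \<tau> \<le> T then traj b a g c1 v \<tau> else traj b a g c2 (traj b a g c1 v T) (\<tau> - T))"
proof (rule is_solutionI_vector_derivative[where S = "{T}"])
  let ?x1 = "traj b a g c1 v" and ?x2 = "traj b a g c2 (traj b a g c1 v T)"
  show "continuous_on {0..} (\<lambda>\<tau>. if \<tau> \<le> T then ?x1 \<tau> else ?x2 (\<tau> - T))"
    by (rule continuous_on_cases_le)
      (auto intro!: continuous_on_traj continuous_on_compose2[OF continuous_on_traj] continuous_intros)
  fix r :: real assume r: "0 < r" "r \<notin> {T}"
  show "((\<lambda>\<tau>. if \<tau> \<le> T then ?x1 \<tau> else ?x2 (\<tau> - T)) has_vector_derivative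
      sys b a g (if r < T then c1 else c2) (if r \<le> T then ?x1 r else ?x2 (r - T))) (at r)"
  proof (cases "r < T")
    case True
    have "(?x1 has_vector_derivative sys b a g c1 (?x1 r)) (at r)"
      by (rule traj_has_vector_derivative[OF b])
    then show ?thesis
      using True by (auto intro: has_vector_derivative_transform_within_open[of _ _ _ "{..<T}"])
  next
    case False
    have "((\<lambda>\<tau>. \<tau> - T) has_vector_derivative 1) (at r)"
      by (auto intro!: derivative_eq_intros)
    from vector_diff_chain_at[OF this traj_has_vector_derivative[OF b]]
    have "((\<lambda>\<tau>. ?x2 (\<tau> - T)) has_vector_derivative sys b a g c2 (?x2 (r - T))) (at r)"
      by (simp add: o_def)
    then show ?thesis
      using False r by (auto intro: has_vector_derivative_transform_within_open[of _ _ _ "{T<..}"])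
  qed
qed (use T in auto)

lemma switched_traj_in_reach_pos:
  assumes "b \<noteq> 0" "c1 \<in> U" "c2 \<in> U" "0 \<le> T" "0 \<le> L"
  shows "traj b a g c2 (traj b a g c1 v T) L \<in> reach_pos (sys b a g) U v"
proof -
  have "(\<lambda>\<tau>. if \<tau> \<le> T then traj b a g c1 v \<tau> else traj b a g c2 (traj b a g c1 v T) (\<tau> - T)) (T + L)
      \<in> reach_pos (sys b a g) U v"
    by (rule reach_posI[OF admissible_switch_control[OF assms(2,3)] switched_traj_solution[OF assms(1,4)]])
      (use assms in simp)
  then show ?thesis using assms(5) by (cases "L = 0") auto
qed

lemma snd_switched_traj:
  assumes "b \<noteq> 0"
  shows "\<exists>P Q. \<forall>T. snd (traj b a g c2 (traj b a g c1 v T) L) = P + Q * exp (b * T) + (a * c1 + g) * c1 * T"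
proof (intro exI allI)
  fix T
  show "snd (traj b a g c2 (traj b a g c1 v T) L) =
    (snd v - (a * c1 + g) * (fst v - c1) / b + (a * c2 + g) * (c2 * L + (c1 - c2) / b * (exp (b * L) - 1)))
    + ((a * c1 + g) * (fst v - c1) / b + (a * c2 + g) * ((fst v - c1) / b) * (exp (b * L) - 1)) * exp (b * T)
    + (a * c1 + g) * c1 * T"
    unfolding traj_def using assms by (simp add: field_simps)
qed

lemma exists_control_signs:
  fixes a g u1 u2 :: real
  assumes g: "g \<noteq> 0" and u: "u1 < 0" "0 < u2"
  shows "\<exists>c\<in>{u1..u2}. 0 < (a * c + g) * c" "\<exists>c\<in>{u1..u2}. (a * c + g) * c < 0"
proof -
  define \<delta> where "\<delta> = min (min u2 (- u1)) (\<bar>g\<bar> / (2 * (\<bar>a\<bar> + 1)))"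
  have \<delta>_pos: "0 < \<delta>" using u g by (simp add: \<delta>_def)
  have "\<delta> \<le> u2" "\<delta> \<le> - u1" by (simp_all add: \<delta>_def)
  then have \<delta>: "\<delta> \<in> {u1..u2}" "- \<delta> \<in> {u1..u2}" using \<delta>_pos by auto
  have "\<bar>a\<bar> * \<delta> \<le> \<bar>a\<bar> * (\<bar>g\<bar> / (2 * (\<bar>a\<bar> + 1)))"
    by (intro mult_left_mono) (auto simp: \<delta>_def)
  also have "\<dots> < \<bar>g\<bar>" using g by (simp add: field_simps add_nonneg_pos)
  finally have small: "\<bar>a * \<delta>\<bar> < \<bar>g\<bar>" using \<delta>_pos by (simp add: abs_mult)
  have "(a * \<delta>)\<^sup>2 < g\<^sup>2"
    using power_strict_mono[OF small abs_ge_zero, of 2] by simp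
  define p m where "p = (a * \<delta> + g) * \<delta>" and "m = (a * - \<delta> + g) * - \<delta>"
  have "p * m < 0"
    using \<open>(a * \<delta>)\<^sup>2 < g\<^sup>2\<close> \<delta>_pos
    unfolding p_def m_def by (simp add: algebra_simps power2_eq_square)
  then have "0 < p \<or> 0 < m" "p < 0 \<or> m < 0" by (auto simp: mult_less_0_iff)
  then show "\<exists>c\<in>{u1..u2}. 0 < (a * c + g) * c" "\<exists>c\<in>{u1..u2}. (a * c + g) * c < 0"
    using \<delta> unfolding p_def m_def by blast+
qed

lemma exists_control_rate_sign:
  fixes a g u1 u2 :: real
  assumes g: "g \<noteq> 0" and u: "u1 < 0" "0 < u2"
  obtains c where "c \<in> {u1..u2}" "(a * c + g) * c \<noteq> 0" "0 \<le> (a * c + g) * c * y"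
proof (cases "0 \<le> y")
  case True
  obtain c where "c \<in> {u1..u2}" "0 < (a * c + g) * c"
    using exists_control_signs(1)[OF g u] by blast
  with True show ?thesis by (intro that[of c]) auto
next
  case False
  obtain c where c: "c \<in> {u1..u2}" "(a * c + g) * c < 0"
    using exists_control_signs(2)[OF g u] by blast
  have "(a * c + g) * c \<noteq> 0" using c(2) by (metis less_irrefl)
  moreover have "0 \<le> (a * c + g) * c * y"
    using c(2) False by (simp add: mult_nonpos_nonpos)
  ultimately show ?thesis using that c(1) by blast
qed

lemma exists_time_exp_small:
  fixes b D \<epsilon> :: real
  assumes "b < 0" "0 < \<epsilon>"
  obtains L where "0 \<le> L" "D * exp (b * L) < \<epsilon>"
proof -
  have "((\<lambda>L. D * exp (b * L)) \<longlongrightarrow> 0) at_top"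
    using assms(1) by (intro tendsto_mult_right_zero filterlim_compose[OF exp_at_bot]
        filterlim_tendsto_neg_mult_at_bot[OF tendsto_const] filterlim_ident)
  then have "eventually (\<lambda>L. 0 \<le> L \<and> D * exp (b * L) < \<epsilon>) at_top"
    using assms(2) by (intro eventually_conj eventually_ge_at_top order_tendstoD(2))
  then show ?thesis
    using that eventually_happens'[OF trivial_limit_at_top_linorder] by blast
qed

lemma exp_affine_attains:
  fixes b k P Q y :: real
  assumes b: "b < 0" and k: "k \<noteq> 0" and y: "0 \<le> k * (y - (P + Q))"
  shows "\<exists>T\<ge>0. P + Q * exp (b * T) + k * T = y"
proof -
  have pos: "\<exists>T\<ge>0. P + Q * exp (b * T) + k * T = y" if k: "0 < k" and y: "P + Q \<le> y" for P Q k y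
  proof -
    define T0 where "T0 = (\<bar>y\<bar> + \<bar>P\<bar> + \<bar>Q\<bar>) / k"
    have T0: "0 \<le> T0" "k * T0 = \<bar>y\<bar> + \<bar>P\<bar> + \<bar>Q\<bar>" using k by (simp_all add: T0_def)
    have "\<bar>Q * exp (b * T0)\<bar> \<le> \<bar>Q\<bar>"
      using b T0(1) by (simp add: abs_mult mult_right_le_one_le mult_nonpos_nonneg)
    then have "y \<le> P + Q * exp (b * T0) + k * T0" using T0(2) by linarith
    moreover have "continuous_on {0..T0} (\<lambda>T. P + Q * exp (b * T) + k * T)"
      by (intro continuous_intros)
    ultimately show ?thesis using IVT'[of "\<lambda>T. P + Q * exp (b * T) + k * T" 0 y T0] y T0(1) by auto
  qed
  show ?thesis
  proof (cases "0 < k")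
    case True
    then show ?thesis using pos y by (simp add: zero_le_mult_iff)
  next
    case False
    with k y have "\<exists>T\<ge>0. - P + - Q * exp (b * T) + - k * T = - y"
      by (intro pos) (auto simp: zero_le_mult_iff)
    then show ?thesis by (auto simp: algebra_simps)
  qed
qed

lemma strip_approx_controllable:
  assumes b: "b < 0" and u: "u1 < 0" "0 < u2" and g: "g \<noteq> 0"
    and v: "fst v \<in> {u1..u2}" and q: "fst q \<in> {u1..u2}"
  shows "q \<in> closure (reach_pos (sys b a g) {u1..u2} v)"
  unfolding closure_approachable
proof (intro allI impI)
  fix \<epsilon> :: real assume "0 < \<epsilon>"
  obtain L where L: "0 \<le> L" "(u2 - u1) * exp (b * L) < \<epsilon>"
    using exists_time_exp_small[OF b \<open>0 < \<epsilon>\<close>] by blast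
  let ?A = "snd (traj b a g (fst q) v L)"
  obtain c where c: "c \<in> {u1..u2}" "(a * c + g) * c \<noteq> 0" "0 \<le> (a * c + g) * c * (snd q - ?A)"
    using exists_control_rate_sign[OF g u] by blast
  let ?z = "\<lambda>T. traj b a g (fst q) (traj b a g c v T) L"
  obtain P Q where PQ: "\<And>T. snd (?z T) = P + Q * exp (b * T) + (a * c + g) * c * T"
    using snd_switched_traj[of b a g "fst q" c v L] b by auto
  have "P + Q = ?A" using PQ[of 0] by simp
  then obtain T where T: "0 \<le> T" "snd (?z T) = snd q"
    using exp_affine_attains[OF b c(2), of "snd q" P Q] c(3) PQ by auto
  have "?z T \<in> reach_pos (sys b a g) {u1..u2} v"
    using b c q T L by (intro switched_traj_in_reach_pos) auto
  moreover have "dist (?z T) q < \<epsilon>"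
  proof -
    have "traj b a g c v T \<in> reach_pos (sys b a g) {u1..u2} v"
      using b c T by (intro reach_posI[OF admissible_const_control traj_solution]) auto
    then have "traj b a g c v T \<in> {u1..u2} \<times> UNIV"
      using reach_pos_subset_strip[OF b v] by blast
    then have "\<bar>fst (traj b a g c v T) - fst q\<bar> \<le> u2 - u1" using q by (auto simp: mem_Times_iff)
    moreover have "dist (?z T) q = \<bar>fst (traj b a g c v T) - fst q\<bar> * exp (b * L)"
      using T(2) by (simp add: dist_prod_def dist_real_def fst_traj_minus abs_mult)
    ultimately have "dist (?z T) q \<le> (u2 - u1) * exp (b * L)" by simp
    with L show ?thesis by simp
  qed
  ultimately show "\<exists>y\<in>reach_pos (sys b a g) {u1..u2} v. dist y q < \<epsilon>" by blast
qed

lemma strip_controlled_invariant_core: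
  assumes b: "b < 0" and u: "u1 < 0" "0 < u2" and g: "g \<noteq> 0"
  shows "controlled_invariant_core (sys b a g) {u1..u2} ({u1..u2} \<times> UNIV)"
  unfolding controlled_invariant_core_def
proof (intro conjI ballI)
  show "{u1..u2} \<times> (UNIV :: real set) \<noteq> {}" using u by auto
  fix v :: "real \<times> real" assume v: "v \<in> {u1..u2} \<times> UNIV"
  have "admissible {u1..u2} (\<lambda>_. fst v)"
    using v by (intro admissible_const_control) (simp add: mem_Times_iff)
  moreover have "is_solution (sys b a g) (\<lambda>_. fst v) v (traj b a g (fst v) v)"
    using b by (intro traj_solution) simp
  moreover have "\<forall>\<tau>\<ge>0. traj b a g (fst v) v \<tau> \<in> {u1..u2} \<times> UNIV"
    using v by (simp add: traj_def mem_Times_iff)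
  ultimately show "\<exists>w x. admissible {u1..u2} w \<and> is_solution (sys b a g) w v x \<and>
      (\<forall>\<tau>\<ge>0. x \<tau> \<in> {u1..u2} \<times> UNIV)"
    by blast
  show "{u1..u2} \<times> UNIV \<subseteq> closure (reach_pos (sys b a g) {u1..u2} v)"
  proof
    fix q :: "real \<times> real" assume "q \<in> {u1..u2} \<times> UNIV"
    then show "q \<in> closure (reach_pos (sys b a g) {u1..u2} v)"
      using strip_approx_controllable[OF b u g, of v q a] v by (simp add: mem_Times_iff)
  qed
qed

lemma strip_unique_control_set:
  assumes "b < 0" "u1 < 0" "0 < u2" "g \<noteq> 0"
  shows "control_set (sys b a g) {u1..u2} ({u1..u2} \<times> UNIV) \<and>
    (\<forall>C. control_set (sys b a g) {u1..u2} C \<longrightarrow> C = {u1..u2} \<times> UNIV)"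
  using assms by (intro unique_control_setI strip_controlled_invariant_core)
    (auto dest: controlled_invariant_core_subset_strip)

section \<open>Isolated equilibria for \<open>\<gamma> = 0\<close>\<close>

definition potential :: "real \<Rightarrow> real \<Rightarrow> real \<times> real \<Rightarrow> real" where
  "potential b a p = snd p / a + (fst p)\<^sup>2 / (2 * b)"

definition corrected_potential :: "real \<Rightarrow> real \<Rightarrow> real \<Rightarrow> real \<times> real \<Rightarrow> real" where
  "corrected_potential b a M p = potential b a p - (fst p) ^ 4 / (4 * b * M\<^sup>2)"

lemma potential_nondecreasing:
  assumes a: "a \<noteq> 0" and b: "b \<noteq> 0" and adm: "admissible U w"
    and sol: "is_solution (sys b a 0) w v x" and \<tau>: "0 \<le> \<tau>"
  shows "potential b a v \<le> potential b a (x \<tau>)"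
proof -
  obtain S where S: "finite S" and x_cont: "continuous_on {0..\<tau>} x"
    and s': "\<And>r. r \<in> {0<..<\<tau>} - S \<Longrightarrow> ((\<lambda>r. fst (x r)) has_real_derivative b * (fst (x r) - w r)) (at r)"
    and t': "\<And>r. r \<in> {0<..<\<tau>} - S \<Longrightarrow> ((\<lambda>r. snd (x r)) has_real_derivative (a * w r + 0) * fst (x r)) (at r)"
    by (rule sys_solution_derivatives[OF adm sol \<tau>]) blast
  have "potential b a (x 0) \<le> potential b a (x \<tau>)"
    unfolding potential_def
  proof (rule nondecreasing_if_derivative_nonneg[OF S \<tau>, where h' = "\<lambda>r. (fst (x r))\<^sup>2"])
    show "continuous_on {0..\<tau>} (\<lambda>r. snd (x r) / a + (fst (x r))\<^sup>2 / (2 * b))"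
      using a b by (intro continuous_intros x_cont) auto
    show "((\<lambda>r. snd (x r) / a + (fst (x r))\<^sup>2 / (2 * b)) has_real_derivative (fst (x r))\<^sup>2) (at r)"
      if "r \<in> {0<..<\<tau>} - S" for r
      using a b by (auto intro!: derivative_eq_intros s'[OF that] t'[OF that]
          simp: field_simps power2_eq_square)
  qed simp
  with sol show ?thesis by (simp add: is_solution_def)
qed

lemma corrected_potential_nondecreasing:
  assumes a: "a \<noteq> 0" and b: "b < 0" and u: "u1 \<le> 0" "0 \<le> u2" "u1 < u2"
    and adm: "admissible {u1..u2} w" and sol: "is_solution (sys b a 0) w v x" and \<tau>: "0 \<le> \<tau>"
    and v: "fst v \<in> {u1..u2}"
  shows "corrected_potential b a (u2 - u1) v \<le> corrected_potential b a (u2 - u1) (x \<tau>)"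
proof -
  define M where "M = u2 - u1"
  have M: "0 < M" using u by (simp add: M_def)
  obtain S where S: "finite S" and x_cont: "continuous_on {0..\<tau>} x"
    and s': "\<And>r. r \<in> {0<..<\<tau>} - S \<Longrightarrow> ((\<lambda>r. fst (x r)) has_real_derivative b * (fst (x r) - w r)) (at r)"
    and t': "\<And>r. r \<in> {0<..<\<tau>} - S \<Longrightarrow> ((\<lambda>r. snd (x r)) has_real_derivative (a * w r + 0) * fst (x r)) (at r)"
    by (rule sys_solution_derivatives[OF adm sol \<tau>]) blast
  let ?h = "\<lambda>r. snd (x r) / a + (fst (x r))\<^sup>2 / (2 * b) - (fst (x r)) ^ 4 / (4 * b * M\<^sup>2)"
  have "?h 0 \<le> ?h \<tau>"
  proof (rule nondecreasing_if_derivative_nonneg[OF S \<tau>,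
        where h' = "\<lambda>r. (fst (x r))\<^sup>2 * (1 - fst (x r) * (fst (x r) - w r) / M\<^sup>2)"])
    show "continuous_on {0..\<tau>} ?h"
      using a b M by (intro continuous_intros x_cont) auto
    show "(?h has_real_derivative (fst (x r))\<^sup>2 * (1 - fst (x r) * (fst (x r) - w r) / M\<^sup>2)) (at r)"
      if "r \<in> {0<..<\<tau>} - S" for r
      using a b M by (auto intro!: derivative_eq_intros s'[OF that] t'[OF that]
          simp: field_simps power2_eq_square eval_nat_numeral)
    show "0 \<le> (fst (x r))\<^sup>2 * (1 - fst (x r) * (fst (x r) - w r) / M\<^sup>2)" if "r \<in> {0..\<tau>}" for r
    proof -
      have "x r \<in> {u1..u2} \<times> UNIV"
        using reach_pos_subset_strip[OF b v] reach_posI[OF adm sol, of r] that by auto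
      moreover have "w r \<in> {u1..u2}" using adm unfolding admissible_def by simp
      ultimately have "\<bar>fst (x r)\<bar> \<le> M" "\<bar>fst (x r) - w r\<bar> \<le> M"
        using u by (auto simp: M_def mem_Times_iff)
      then have "\<bar>fst (x r) * (fst (x r) - w r)\<bar> \<le> M\<^sup>2"
        unfolding abs_mult power2_eq_square by (intro mult_mono) auto
      then have "fst (x r) * (fst (x r) - w r) / M\<^sup>2 \<le> 1" using M by simp
      then show ?thesis by simp
    qed
  qed
  with sol show ?thesis
    by (simp add: corrected_potential_def potential_def is_solution_def M_def)
qed

lemma potential_squeeze_eq:
  assumes a: "a \<noteq> 0" and b: "b < 0" and M: "M \<noteq> 0" and q: "fst q = 0"
    and V: "potential b a q \<le> potential b a p"
    and H: "corrected_potential b a M p \<le> corrected_potential b a M q"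
  shows "p = q"
proof -
  have "0 \<le> (fst p) ^ 4 / (4 * b * M\<^sup>2)"
    using V H q unfolding corrected_potential_def by simp
  moreover have "4 * b * M\<^sup>2 < 0" using b M by (simp add: mult_neg_pos)
  ultimately have "(fst p) ^ 4 \<le> 0" by (simp add: zero_le_divide_iff)
  then have s: "fst p = 0" by (simp add: power_le_zero_eq)
  then have "potential b a p \<le> potential b a q"
    using H q by (simp add: corrected_potential_def)
  with V s q a have "snd p = snd q" by (simp add: potential_def)
  with s q show "p = q" by (simp add: prod_eq_iff)
qed

lemma equilibrium_control_set:
  assumes a: "a \<noteq> 0" and b: "b < 0" and u: "u1 < 0" "0 < u2"
  shows "control_set (sys b a 0) {u1..u2} {(0, t)}"
  unfolding control_set_def
proof (intro conjI allI impI)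
  let ?R = "reach_pos (sys b a 0) {u1..u2}" and ?M = "u2 - u1"
  show "controlled_invariant_core (sys b a 0) {u1..u2} {(0, t)}"
    using u by (intro equilibrium_controlled_invariant_core[of 0]) (auto simp: sys_def zero_prod_def)
  fix D assume D: "{(0, t)} \<subseteq> D" "controlled_invariant_core (sys b a 0) {u1..u2} D"
  have "p = (0, t)" if "p \<in> D" for p
  proof -
    have p_approx: "p \<in> closure (?R (0, t))" and origin_approx: "(0, t) \<in> closure (?R p)"
      using D that unfolding controlled_invariant_core_def by auto
    have "closure (?R (0, t)) \<subseteq> {u1..u2} \<times> UNIV"
      using u by (intro closure_minimal reach_pos_subset_strip[OF b] closed_Times) auto
    with p_approx have p_strip: "fst p \<in> {u1..u2}" by (auto simp: mem_Times_iff)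
    have V: "potential b a (0, t) \<le> potential b a p"
    proof (rule closure_reach_pos_nondecreasing[OF _ _ p_approx])
      show "continuous_on UNIV (potential b a)"
        unfolding potential_def using a b by (intro continuous_intros) auto
      show "potential b a (0, t) \<le> potential b a q" if "q \<in> ?R (0, t)" for q
        using that b a by (auto elim!: reach_posE intro: potential_nondecreasing)
    qed
    have H: "corrected_potential b a ?M p \<le> corrected_potential b a ?M (0, t)"
    proof (rule closure_reach_pos_nondecreasing[OF _ _ origin_approx])
      show "continuous_on UNIV (corrected_potential b a ?M)"
        unfolding corrected_potential_def potential_def using a b u by (intro continuous_intros) auto
      show "corrected_potential b a ?M p \<le> corrected_potential b a ?M q" if "q \<in> ?R p" for q
        using that a b u p_strip by (auto elim!: reach_posE intro: corrected_potential_nondecreasing)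
    qed
    show "p = (0, t)"
      by (rule potential_squeeze_eq[OF a b _ _ V H]) (use u in auto)
  qed
  with D show "D = {(0, t)}" by blast
qed

theorem theorem2:
  fixes \<beta> a \<gamma> u1 u2 :: real
  assumes "\<beta> < 0" and "u1 < 0" and "0 < u2"
  shows "(\<gamma> \<noteq> 0 \<longrightarrow>
            control_set (sys \<beta> a \<gamma>) {u1..u2} ({u1..u2} \<times> UNIV) \<and>
            (\<forall>C. control_set (sys \<beta> a \<gamma>) {u1..u2} C \<longrightarrow> C = {u1..u2} \<times> UNIV))
       \<and> (\<gamma> = 0 \<and> a \<noteq> 0 \<longrightarrow>
            (\<forall>t. control_set (sys \<beta> a \<gamma>) {u1..u2} {(0, t)}) \<and>
            (\<forall>t t' :: real. t \<noteq> t' \<longrightarrow> {(0::real, t)} \<noteq> {(0, t')}))"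
  using strip_unique_control_set[OF assms] equilibrium_control_set[OF _ assms] by auto

end
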